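(* If $G$ is a connected graph and $f=(V_0,V_1,V_2)$ is an OIRD function of $G$ of minimum weight $\gamma_{oiR}(G)$ (where $V_i=\{v: f(v)=i\}$), then $\gamma_{oidR}(G)\le 2\gamma_{oiR}(G)-|V_2|$.
   Context: A DRD function of $G$ is $f:V(G)\to\{0,1,2,3\}$ such that every vertex with value $0$ has a neighbor with value $3$ or two neighbors with value $2$, and every vertex with value $1$ has a neighbor with value at least $2$; it is an OIDRD function if the set of vertices with value $0$ is independent, and $\gamma_{oidR}(G)$ is the minimum weight $\sum_v f(v)$ of an OIDRD function. A Roman dominating function is $f:V(G)\to\{0,1,2\}$ such that every vertex with value $0$ has a neighbor with value $2$; it is an OIRD function if the set of vertices with value $0$ is independent, and $\gamma_{oiR}(G)$ is the minimum weight of an OIRD function. *)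

theory Defs
  imports Main
begin

definition graph :: "'a set \<Rightarrow> ('a \<Rightarrow> 'a \<Rightarrow> bool) \<Rightarrow> bool" where
  "graph V E \<longleftrightarrow> finite V \<and> (\<forall>u v. E u v \<longrightarrow> u \<in> V \<and> v \<in> V)
     \<and> (\<forall>u v. E u v \<longrightarrow> E v u) \<and> (\<forall>v. \<not> E v v)"

definition connected_graph :: "'a set \<Rightarrow> ('a \<Rightarrow> 'a \<Rightarrow> bool) \<Rightarrow> bool" where
  "connected_graph V E \<longleftrightarrow> graph V E \<and> V \<noteq> {} \<and> (\<forall>u\<in>V. \<forall>v\<in>V. E\<^sup>*\<^sup>* u v)"

definition weight :: "'a set \<Rightarrow> ('a \<Rightarrow> nat) \<Rightarrow> nat" where
  "weight V f = (\<Sum>v\<in>V. f v)"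

definition is_RDF :: "'a set \<Rightarrow> ('a \<Rightarrow> 'a \<Rightarrow> bool) \<Rightarrow> ('a \<Rightarrow> nat) \<Rightarrow> bool" where
  "is_RDF V E f \<longleftrightarrow> (\<forall>v\<in>V. f v \<le> 2 \<and> (f v = 0 \<longrightarrow> (\<exists>u. E v u \<and> f u = 2)))"

definition is_OIRD :: "'a set \<Rightarrow> ('a \<Rightarrow> 'a \<Rightarrow> bool) \<Rightarrow> ('a \<Rightarrow> nat) \<Rightarrow> bool" where
  "is_OIRD V E f \<longleftrightarrow> is_RDF V E f \<and>
     (\<forall>u\<in>V. \<forall>v\<in>V. f u = 0 \<and> f v = 0 \<longrightarrow> \<not> E u v)"

definition is_DRD :: "'a set \<Rightarrow> ('a \<Rightarrow> 'a \<Rightarrow> bool) \<Rightarrow> ('a \<Rightarrow> nat) \<Rightarrow> bool" where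
  "is_DRD V E f \<longleftrightarrow> (\<forall>v\<in>V. f v \<le> 3
     \<and> (f v = 0 \<longrightarrow> (\<exists>u. E v u \<and> f u = 3) \<or>
                     (\<exists>u w. u \<noteq> w \<and> E v u \<and> E v w \<and> f u = 2 \<and> f w = 2))
     \<and> (f v = 1 \<longrightarrow> (\<exists>u. E v u \<and> f u \<ge> 2)))"

definition is_OIDRD :: "'a set \<Rightarrow> ('a \<Rightarrow> 'a \<Rightarrow> bool) \<Rightarrow> ('a \<Rightarrow> nat) \<Rightarrow> bool" where
  "is_OIDRD V E f \<longleftrightarrow> is_DRD V E f \<and>
     (\<forall>u\<in>V. \<forall>v\<in>V. f u = 0 \<and> f v = 0 \<longrightarrow> \<not> E u v)"

definition gamma_oiR :: "'a set \<Rightarrow> ('a \<Rightarrow> 'a \<Rightarrow> bool) \<Rightarrow> nat" where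
  "gamma_oiR V E = (LEAST w. \<exists>f. is_OIRD V E f \<and> weight V f = w)"

definition gamma_oidR :: "'a set \<Rightarrow> ('a \<Rightarrow> 'a \<Rightarrow> bool) \<Rightarrow> nat" where
  "gamma_oidR V E = (LEAST w. \<exists>f. is_OIDRD V E f \<and> weight V f = w)"

end

theory Submission
  imports Defs
begin

text \<open>Relabelling an OIRD function by 0, 1, 2 \<mapsto> 0, 2, 3 yields an OIDRD function: the
  vertices of value 0 stay the same, each still has a neighbour of value 3, and no vertex has
  value 1. The new weight is twice the old one minus the number of vertices of value 2.\<close>

definition double_roman_lift :: "('a \<Rightarrow> nat) \<Rightarrow> 'a \<Rightarrow> nat" where
  "double_roman_lift f v = (if f v = 0 then 0 else if f v = 1 then 2 else 3)"

lemma is_OIDRD_double_roman_lift: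
  assumes "is_OIRD V E f"
  shows "is_OIDRD V E (double_roman_lift f)"
proof -
  have "\<exists>u. E v u \<and> double_roman_lift f u = 3" if v: "v \<in> V" "f v = 0" for v
  proof -
    obtain u where "E v u" "f u = 2"
      using assms v unfolding is_OIRD_def is_RDF_def by blast
    then show ?thesis by (intro exI[of _ u]) (simp add: double_roman_lift_def)
  qed
  moreover have "double_roman_lift f v \<noteq> 1" for v
    by (simp add: double_roman_lift_def)
  ultimately show ?thesis
    using assms unfolding is_OIDRD_def is_DRD_def is_OIRD_def
    by (auto simp: double_roman_lift_def)
qed

lemma weight_double_roman_lift:
  assumes "finite V" and "\<forall>v\<in>V. f v \<le> 2"
  shows "weight V (double_roman_lift f) + card {v\<in>V. f v = 2} = 2 * weight V f"
proof -
  have pointwise: "double_roman_lift f v + (if f v = 2 then 1 else 0) = 2 * f v" if "v \<in> V" for v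
    using assms(2) that by (auto simp: double_roman_lift_def)
  have "card {v\<in>V. f v = 2} = (\<Sum>v\<in>V. if f v = 2 then 1 else 0)"
    using assms(1) by (simp add: sum.If_cases Int_def)
  then show ?thesis
    unfolding weight_def by (simp add: sum.distrib[symmetric] sum_distrib_left pointwise)
qed

lemma gamma_oidR_le_weight:
  assumes "is_OIDRD V E g"
  shows "gamma_oidR V E \<le> weight V g"
  using assms unfolding gamma_oidR_def by (auto intro: Least_le)

theorem corollary1:
  fixes V :: "'a set" and E :: "'a \<Rightarrow> 'a \<Rightarrow> bool" and f :: "'a \<Rightarrow> nat"
  assumes "connected_graph V E"
    and "is_OIRD V E f"
    and "weight V f = gamma_oiR V E"
  shows "int (gamma_oidR V E) \<le> 2 * int (gamma_oiR V E) - int (card {v\<in>V. f v = 2})"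
proof -
  have "finite V"
    using assms(1) unfolding connected_graph_def graph_def by blast
  moreover have "\<forall>v\<in>V. f v \<le> 2"
    using assms(2) unfolding is_OIRD_def is_RDF_def by blast
  ultimately have "weight V (double_roman_lift f) + card {v\<in>V. f v = 2} = 2 * gamma_oiR V E"
    using weight_double_roman_lift assms(3) by metis
  moreover have "gamma_oidR V E \<le> weight V (double_roman_lift f)"
    using gamma_oidR_le_weight is_OIDRD_double_roman_lift assms(2) by blast
  ultimately show ?thesis by linarith
qed

end
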